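(* Let $a,b,\alpha,\beta$ be complex numbers with $2a-b\neq 0$ and $\beta a-\alpha b\neq 0$, let $n\ge1$ be an integer, and let $s$ be a square root of $\frac{b+2a}{b-2a}$. Then \[ \Psi\left(\begin{array}{cc|c} a & b & n \\ \alpha & \beta & 0 \end{array}\right)=\Psi(a,b,n)=\frac{(2a-b)^{\lfloor n/2\rfloor}}{2^n}\Big\{(1+s)^n+(1-s)^n\Big\}, \] and, if moreover $b+2a\neq 0$, \[ \Phi\left(\begin{array}{cc|c} a & b & n \\ \alpha & \beta & 0 \end{array}\right)=\Phi(a,b,n)=\frac{(2a-b)^{\lfloor (n-1)/2\rfloor}}{2^n s}\Big\{(1+s)^n-(1-s)^n\Big\}. \]
   Context: $\delta(m)=1$ for $m$ odd, $\delta(m)=0$ for $m$ even; $\lfloor\cdot\rfloor$ is the floor. For $a,b$, the sequences $\Psi(a,b,n)$, $\Phi(a,b,n)$ ($n\ge0$) are defined by $\Psi(a,b,0)=2$, $\Psi(a,b,1)=1$, $\Psi(a,b,n+1)=(2a-b)^{\delta(n)}\Psi(a,b,n)-a\Psi(a,b,n-1)$, and $\Phi(a,b,0)=0$, $\Phi(a,b,1)=1$, $\Phi(a,b,n+1)=(2a-b)^{\delta(n+1)}\Phi(a,b,n)-a\Phi(a,b,n-1)$ for $n\ge1$. For indeterminates $a,b,\alpha,\beta$ and $n\ge1$, $\Psi\left(\begin{array}{cc|c} a & b & n \\ \alpha & \beta & r \end{array}\right)$ ($0\le r\le\lfloor n/2\rfloor$) and $\Phi\left(\begin{array}{cc|c}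 a & b & n \\ \alpha & \beta & r \end{array}\right)$ ($0\le r\le\lfloor (n-1)/2\rfloor$) denote the unique polynomials in $\mathbb{Z}[a,b,\alpha,\beta]$ such that, identically in $x,y$, $(\beta a-\alpha b)^{\lfloor n/2\rfloor}\frac{x^n+y^n}{(x+y)^{\delta(n)}}=\sum_{r}\Psi\left(\begin{array}{cc|c} a & b & n \\ \alpha & \beta & r \end{array}\right)(\alpha x^2+\beta xy+\alpha y^2)^{\lfloor n/2\rfloor-r}(ax^2+bxy+ay^2)^r$ and $(\beta a-\alpha b)^{\lfloor (n-1)/2\rfloor}\frac{x^n-y^n}{(x-y)(x+y)^{\delta(n-1)}}=\sum_{r}\Phi\left(\begin{array}{cc|c} a & b & n \\ \alpha & \beta & r \end{array}\right)(\alpha x^2+\beta xy+\alpha y^2)^{\lfloor (n-1)/2\rfloor-r}(ax^2+bxy+ay^2)^r$ (uniqueness holds since the two quadratic forms are algebraically independent when $\beta a-\alpha b\ne0$). For numerical $a,b,\alpha,\beta$ these polynomials are evaluated. *)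

theory Defs
  imports Complex_Main
begin

definition delta :: "nat \<Rightarrow> nat" where
  "delta m = (if odd m then 1 else 0)"

fun Psi_seq :: "complex \<Rightarrow> complex \<Rightarrow> nat \<Rightarrow> complex" where
  "Psi_seq a b 0 = 2"
| "Psi_seq a b (Suc 0) = 1"
| "Psi_seq a b (Suc (Suc k)) =
     (2*a - b) ^ delta (Suc k) * Psi_seq a b (Suc k) - a * Psi_seq a b k"

fun Phi_seq :: "complex \<Rightarrow> complex \<Rightarrow> nat \<Rightarrow> complex" where
  "Phi_seq a b 0 = 0"
| "Phi_seq a b (Suc 0) = 1"
| "Phi_seq a b (Suc (Suc k)) =
     (2*a - b) ^ delta (Suc (Suc k)) * Phi_seq a b (Suc k) - a * Phi_seq a b k"

text \<open>The coefficients Psi(a b n | alpha beta r), evaluated at numerical a,b,alpha,beta: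
  the unique coefficient family (indexed by r \<le> floor(n/2), zero beyond) such that,
  identically in x,y (the division by (x+y)^delta(n) being cleared),
  (beta a - alpha b)^floor(n/2) (x^n+y^n)
    = (x+y)^delta(n) * sum_r c_r (alpha x^2+beta xy+alpha y^2)^(floor(n/2)-r) (a x^2+b xy+a y^2)^r.\<close>
definition Psi_coef ::
  "complex \<Rightarrow> complex \<Rightarrow> complex \<Rightarrow> complex \<Rightarrow> nat \<Rightarrow> nat \<Rightarrow> complex" where
  "Psi_coef a b \<alpha> \<beta> n =
     (THE c. (\<forall>r. n div 2 < r \<longrightarrow> c r = 0) \<and>
        (\<forall>x y::complex. (\<beta>*a - \<alpha>*b) ^ (n div 2) * (x^n + y^n) =
           (x + y) ^ delta n *
           (\<Sum>r\<le>n div 2. c r * (\<alpha>*x^2 + \<beta>*x*y + \<alpha>*y^2) ^ (n div 2 - r)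
                                 * (a*x^2 + b*x*y + a*y^2) ^ r)))"

definition Phi_coef ::
  "complex \<Rightarrow> complex \<Rightarrow> complex \<Rightarrow> complex \<Rightarrow> nat \<Rightarrow> nat \<Rightarrow> complex" where
  "Phi_coef a b \<alpha> \<beta> n =
     (THE c. (\<forall>r. (n - 1) div 2 < r \<longrightarrow> c r = 0) \<and>
        (\<forall>x y::complex. (\<beta>*a - \<alpha>*b) ^ ((n - 1) div 2) * (x^n - y^n) =
           (x - y) * (x + y) ^ delta (n - 1) *
           (\<Sum>r\<le>(n - 1) div 2. c r * (\<alpha>*x^2 + \<beta>*x*y + \<alpha>*y^2) ^ ((n - 1) div 2 - r)
                                 * (a*x^2 + b*x*y + a*y^2) ^ r)))"

end

theory Submission
  imports Defs
begin

(*
  Both quadratic forms are linear in x^2 + y^2 and xy, and since beta a - alpha b is nonzero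
  this can be inverted: (beta a - alpha b)(x^2 + y^2) and (beta a - alpha b) xy are linear
  combinations of the two forms. The quotients of x^n + y^n and x^n - y^n by their obvious
  factors satisfy a second order recurrence with coefficients x^2 + y^2 and (xy)^2, so after
  multiplication by a power of beta a - alpha b they are homogeneous polynomials in the two
  forms. The coefficients are unique: at the points where the first form equals 1 and the
  divisor does not vanish, the second form takes every value outside a finite set, so two
  expansions would differ by a polynomial with infinitely many roots.

  The coefficient of index 0 is read off at a zero of the second form: if x0 + y0 = p and
  x0 y0 = a with p^2 = 2a - b, then a x0^2 + b x0 y0 + a y0^2 = 0 while the first form equals
  beta a - alpha b. Writing 2a - b = p^2 turns the recurrences of Psi and Phi into
  u(n+2) = p u(n+1) - a u(n) up to powers of p, so x0^n + y0^n and x0^n - y0^n are Psi(a,b,n)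
  and Phi(a,b,n) up to such powers; the choice x0, y0 = p (1 +- s) / 2 gives the closed forms.
*)

section \<open>Homogeneous polynomials in two given functions\<close>

definition homogeneous_in ::
  "('b \<Rightarrow> 'b \<Rightarrow> 'a::comm_ring_1) \<Rightarrow> ('b \<Rightarrow> 'b \<Rightarrow> 'a) \<Rightarrow> nat \<Rightarrow> ('b \<Rightarrow> 'b \<Rightarrow> 'a) \<Rightarrow> bool" where
  "homogeneous_in P Q m G \<longleftrightarrow>
     (\<exists>c. \<forall>x y. G x y = (\<Sum>r\<le>m. c r * P x y ^ (m - r) * Q x y ^ r))"

lemma homogeneous_in_cong:
  "homogeneous_in P Q m F \<Longrightarrow> (\<And>x y. F x y = G x y) \<Longrightarrow> homogeneous_in P Q m G"
  unfolding homogeneous_in_def by simp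

lemma homogeneous_in_const: "homogeneous_in P Q 0 (\<lambda>x y. k)"
  unfolding homogeneous_in_def by (rule exI[of _ "\<lambda>_. k"]) simp

lemma homogeneous_in_lincomb:
  assumes "homogeneous_in P Q m F" and "homogeneous_in P Q m G"
  shows "homogeneous_in P Q m (\<lambda>x y. k * F x y + l * G x y)"
proof -
  obtain c d where
    c: "\<And>x y. F x y = (\<Sum>r\<le>m. c r * P x y ^ (m - r) * Q x y ^ r)" and
    d: "\<And>x y. G x y = (\<Sum>r\<le>m. d r * P x y ^ (m - r) * Q x y ^ r)"
    using assms unfolding homogeneous_in_def by blast
  show ?thesis
    unfolding homogeneous_in_def
    by (rule exI[of _ "\<lambda>r. k * c r + l * d r"])
      (simp add: c d sum_distrib_left sum.distrib[symmetric] algebra_simps)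
qed

lemma homogeneous_in_mult_P:
  assumes "homogeneous_in P Q m G"
  shows "homogeneous_in P Q (Suc m) (\<lambda>x y. P x y * G x y)"
proof -
  obtain c where c: "\<And>x y. G x y = (\<Sum>r\<le>m. c r * P x y ^ (m - r) * Q x y ^ r)"
    using assms unfolding homogeneous_in_def by blast
  have "P x y * G x y = (\<Sum>r\<le>Suc m. (c(Suc m := 0)) r * P x y ^ (Suc m - r) * Q x y ^ r)" for x y
    by (simp add: c sum_distrib_left Suc_diff_le algebra_simps)
  then show ?thesis
    unfolding homogeneous_in_def by blast
qed

lemma homogeneous_in_mult_Q:
  assumes "homogeneous_in P Q m G"
  shows "homogeneous_in P Q (Suc m) (\<lambda>x y. Q x y * G x y)"
proof -
  obtain c where c: "\<And>x y. G x y = (\<Sum>r\<le>m. c r * P x y ^ (m - r) * Q x y ^ r)"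
    using assms unfolding homogeneous_in_def by blast
  have "Q x y * G x y =
      (\<Sum>r\<le>Suc m. (case r of 0 \<Rightarrow> 0 | Suc i \<Rightarrow> c i) * P x y ^ (Suc m - r) * Q x y ^ r)" for x y
    by (simp only: sum.atMost_Suc_shift) (simp add: c sum_distrib_left algebra_simps)
  then show ?thesis
    unfolding homogeneous_in_def by blast
qed

lemma homogeneous_in_mult_linear:
  assumes "homogeneous_in P Q m G" and "\<And>x y. L x y = k * P x y + l * Q x y"
  shows "homogeneous_in P Q (Suc m) (\<lambda>x y. L x y * G x y)"
  by (rule homogeneous_in_cong[OF homogeneous_in_lincomb[OF
        homogeneous_in_mult_P[OF assms(1)] homogeneous_in_mult_Q[OF assms(1)]]])
    (simp add: assms(2) algebra_simps)

fun horadam :: "'a::comm_ring_1 \<Rightarrow> 'a \<Rightarrow> 'a \<Rightarrow> 'a \<Rightarrow> nat \<Rightarrow> 'a" where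
  "horadam w0 w1 p q 0 = w0"
| "horadam w0 w1 p q (Suc 0) = w1"
| "horadam w0 w1 p q (Suc (Suc n)) = p * horadam w0 w1 p q (Suc n) - q * horadam w0 w1 p q n"

lemma horadam_closed_form:
  assumes "z * w0 = A + B" and "z * w1 = A * r + B * t" and "p = r + t" and "q = r * t"
  shows "z * horadam w0 w1 p q n = A * r ^ n + B * t ^ n"
proof (induction n rule: induct_nat_012)
  case (ge2 n)
  have "z * horadam w0 w1 p q (Suc (Suc n)) =
      (r + t) * (z * horadam w0 w1 p q (Suc n)) - r * t * (z * horadam w0 w1 p q n)"
    by (simp add: assms(3,4) algebra_simps)
  also have "\<dots> = A * r ^ Suc (Suc n) + B * t ^ Suc (Suc n)"
    by (simp add: ge2 algebra_simps)
  finally show ?case .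
qed (use assms in simp_all)

lemma homogeneous_in_horadam:
  assumes W0: "homogeneous_in P Q 0 W0" and W1: "homogeneous_in P Q 1 (\<lambda>x y. d * W1 x y)"
    and U: "\<And>x y. d * U x y = k1 * P x y + k2 * Q x y"
    and V: "\<And>x y. d * V x y = l1 * P x y + l2 * Q x y"
  shows "homogeneous_in P Q n (\<lambda>x y. d ^ n * horadam (W0 x y) (W1 x y) (U x y) (V x y ^ 2) n)"
proof (induction n rule: induct_nat_012)
  case (ge2 n)
  let ?h = "\<lambda>n x y. d ^ n * horadam (W0 x y) (W1 x y) (U x y) (V x y ^ 2) n"
  have "homogeneous_in P Q (Suc (Suc n))
      (\<lambda>x y. 1 * (d * U x y * ?h (Suc n) x y) + (-1) * (d * V x y * (d * V x y * ?h n x y)))"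
    using U V by (intro homogeneous_in_lincomb homogeneous_in_mult_linear ge2) auto
  then show ?case
    by (rule homogeneous_in_cong) (simp add: power2_eq_square algebra_simps)
qed (use W0 W1 in simp_all)

section \<open>Uniqueness of the coefficients\<close>

lemma polyfun_coeffs_zero_cofinite:
  fixes c :: "nat \<Rightarrow> 'a::{idom, real_normed_div_algebra}"
  assumes "finite E" and "\<And>t. t \<notin> E \<Longrightarrow> (\<Sum>i\<le>m. c i * t ^ i) = 0" and "k \<le> m"
  shows "c k = 0"
proof (rule ccontr)
  assume "c k \<noteq> 0"
  then have "finite ({t. (\<Sum>i\<le>m. c i * t ^ i) = 0} \<union> E)"
    using polyfun_finite_roots[of c m] assms(1,3) by auto
  moreover have "UNIV \<subseteq> {t. (\<Sum>i\<le>m. c i * t ^ i) = 0} \<union> E"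
    using assms(2) by blast
  ultimately show False
    using infinite_UNIV_char_0 finite_subset by blast
qed

definition expansion_coeffs ::
  "('b \<Rightarrow> 'b \<Rightarrow> 'a::comm_ring_1) \<Rightarrow> ('b \<Rightarrow> 'b \<Rightarrow> 'a) \<Rightarrow> nat \<Rightarrow>
   ('b \<Rightarrow> 'b \<Rightarrow> 'a) \<Rightarrow> ('b \<Rightarrow> 'b \<Rightarrow> 'a) \<Rightarrow> nat \<Rightarrow> 'a" where
  "expansion_coeffs P Q m g F =
     (THE c. (\<forall>r. m < r \<longrightarrow> c r = 0) \<and>
        (\<forall>x y. F x y = g x y * (\<Sum>r\<le>m. c r * P x y ^ (m - r) * Q x y ^ r)))"

lemma expansion_unique:
  fixes P Q g F G :: "'b \<Rightarrow> 'b \<Rightarrow> 'a::{idom, real_normed_div_algebra}"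
  assumes E: "finite E"
    and points: "\<And>t. t \<notin> E \<Longrightarrow> \<exists>x y. P x y = 1 \<and> Q x y = t \<and> g x y \<noteq> 0"
    and G: "homogeneous_in P Q m G" and F: "\<And>x y. F x y = g x y * G x y"
  shows "\<exists>!c. (\<forall>r. m < r \<longrightarrow> c r = 0) \<and>
    (\<forall>x y. F x y = g x y * (\<Sum>r\<le>m. c r * P x y ^ (m - r) * Q x y ^ r))"
proof (rule ex_ex1I)
  obtain c where c: "\<And>x y. G x y = (\<Sum>r\<le>m. c r * P x y ^ (m - r) * Q x y ^ r)"
    using G unfolding homogeneous_in_def by blast
  show "\<exists>c. (\<forall>r. m < r \<longrightarrow> c r = 0) \<and>
      (\<forall>x y. F x y = g x y * (\<Sum>r\<le>m. c r * P x y ^ (m - r) * Q x y ^ r))"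
    by (rule exI[of _ "\<lambda>r. if r \<le> m then c r else 0"]) (simp add: F c)
next
  fix c d
  assume "(\<forall>r. m < r \<longrightarrow> c r = 0) \<and>
      (\<forall>x y. F x y = g x y * (\<Sum>r\<le>m. c r * P x y ^ (m - r) * Q x y ^ r))"
    and "(\<forall>r. m < r \<longrightarrow> d r = 0) \<and>
      (\<forall>x y. F x y = g x y * (\<Sum>r\<le>m. d r * P x y ^ (m - r) * Q x y ^ r))"
  then have c0: "\<And>r. m < r \<Longrightarrow> c r = 0" and d0: "\<And>r. m < r \<Longrightarrow> d r = 0"
    and cF: "\<And>x y. F x y = g x y * (\<Sum>r\<le>m. c r * P x y ^ (m - r) * Q x y ^ r)"
    and dF: "\<And>x y. F x y = g x y * (\<Sum>r\<le>m. d r * P x y ^ (m - r) * Q x y ^ r)"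
    by blast+
  have roots: "(\<Sum>r\<le>m. (c r - d r) * t ^ r) = 0" if t: "t \<notin> E" for t
  proof -
    obtain x y where xy: "P x y = 1" "Q x y = t" and g: "g x y \<noteq> 0"
      using points[OF t] by blast
    have "F x y = g x y * (\<Sum>r\<le>m. c r * t ^ r)" "F x y = g x y * (\<Sum>r\<le>m. d r * t ^ r)"
      using cF[of x y] dF[of x y] xy by simp_all
    then show ?thesis
      using g by (simp add: left_diff_distrib sum_subtractf)
  qed
  have "c r - d r = 0" if "r \<le> m" for r
    using polyfun_coeffs_zero_cofinite[OF E roots that] .
  then show "c = d"
    using c0 d0 by (metis eq_iff_diff_eq_0 not_le ext)
qed

lemma expansion_coeffs_0:
  fixes P Q g F G :: "'b \<Rightarrow> 'b \<Rightarrow> 'a::{idom, real_normed_div_algebra}"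
  assumes "finite E"
    and "\<And>t. t \<notin> E \<Longrightarrow> \<exists>x y. P x y = 1 \<and> Q x y = t \<and> g x y \<noteq> 0"
    and "homogeneous_in P Q m G" and "\<And>x y. F x y = g x y * G x y"
    and Q0: "Q x0 y0 = 0"
  shows "F x0 y0 = g x0 y0 * expansion_coeffs P Q m g F 0 * P x0 y0 ^ m"
proof -
  let ?c = "expansion_coeffs P Q m g F"
  have "\<forall>x y. F x y = g x y * (\<Sum>r\<le>m. ?c r * P x y ^ (m - r) * Q x y ^ r)"
    using theI'[OF expansion_unique[OF assms(1-4)]] unfolding expansion_coeffs_def by blast
  then have "F x0 y0 = g x0 y0 * (\<Sum>r\<le>m. ?c r * P x0 y0 ^ (m - r) * 0 ^ r)"
    using Q0 by simp
  also have "(\<Sum>r\<le>m. ?c r * P x0 y0 ^ (m - r) * 0 ^ r) = ?c 0 * P x0 y0 ^ m"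
    by (cases m) (simp_all add: sum.atMost_Suc_shift del: sum.atMost_Suc)
  finally show ?thesis
    by (simp add: mult.assoc)
qed

section \<open>The pencil of symmetric binary quadratic forms\<close>

definition sym_form :: "'a::comm_ring_1 \<Rightarrow> 'a \<Rightarrow> 'a \<Rightarrow> 'a \<Rightarrow> 'a" where
  "sym_form a b x y = a * x^2 + b * x * y + a * y^2"

lemma sym_form_eq: "sym_form a b x y = a * (x^2 + y^2) + b * (x * y)"
  by (simp add: sym_form_def algebra_simps)

lemma sum_squares_by_sym_forms:
  "(\<beta>*a - \<alpha>*b) * (x^2 + y^2) = - b * sym_form \<alpha> \<beta> x y + \<beta> * sym_form a b x y"
  by (simp add: sym_form_eq algebra_simps)

lemma product_by_sym_forms:
  "(\<beta>*a - \<alpha>*b) * (x * y) = a * sym_form \<alpha> \<beta> x y + - \<alpha> * sym_form a b x y"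
  by (simp add: sym_form_eq algebra_simps)

lemma homogeneous_in_sym_form_horadam:
  "homogeneous_in (sym_form \<alpha> \<beta>) (sym_form a b) n
     (\<lambda>x y. (\<beta>*a - \<alpha>*b) ^ n *
        horadam w0 (k * (x^2 + y^2) + l * (x * y)) (x^2 + y^2) ((x * y)^2) n)"
proof -
  have "homogeneous_in (sym_form \<alpha> \<beta>) (sym_form a b) (Suc 0)
      (\<lambda>x y. (\<beta>*a - \<alpha>*b) * (k * (x^2 + y^2) + l * (x * y)) * 1)"
    by (rule homogeneous_in_mult_linear[OF homogeneous_in_const,
          where k = "- b * k + a * l" and l = "\<beta> * k - \<alpha> * l"])
      (simp add: sym_form_eq algebra_simps)
  then have "homogeneous_in (sym_form \<alpha> \<beta>) (sym_form a b) 1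
      (\<lambda>x y. (\<beta>*a - \<alpha>*b) * (k * (x^2 + y^2) + l * (x * y)))"
    by simp
  then show ?thesis
    by (rule homogeneous_in_horadam[OF homogeneous_in_const _
          sum_squares_by_sym_forms product_by_sym_forms])
qed

lemma power_sum_expansion:
  "\<exists>G. homogeneous_in (sym_form \<alpha> \<beta>) (sym_form a b) (n div 2) G \<and>
     (\<forall>x y. (\<beta>*a - \<alpha>*b) ^ (n div 2) * (x^n + y^n) = (x + y) ^ delta n * G x y)"
proof (cases "even n")
  case True
  then obtain m where n: "n = 2 * m" by blast
  define h where "h x y = horadam 2 (1 * (x^2 + y^2) + 0 * (x * y)) (x^2 + y^2) ((x * y)^2) m"
    for x y :: 'a
  have "x^n + y^n = 1 * (x^2) ^ m + 1 * (y^2) ^ m" for x y :: 'a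
    by (simp add: n power_mult)
  also have "\<dots> x y = 1 * h x y" for x y :: 'a
    unfolding h_def by (rule horadam_closed_form[symmetric]) (simp_all add: power_mult_distrib)
  finally show ?thesis
    using homogeneous_in_sym_form_horadam[of \<alpha> \<beta> a b m 2 1 0] n
    by (auto simp: h_def delta_def intro!: exI[of _ "\<lambda>x y. (\<beta>*a - \<alpha>*b) ^ m * h x y"])
next
  case False
  then obtain m where n: "n = 2 * m + 1" using oddE by blast
  define h where "h x y = horadam 1 (1 * (x^2 + y^2) + (-1) * (x * y)) (x^2 + y^2) ((x * y)^2) m"
    for x y :: 'a
  have "x^n + y^n = x * (x^2) ^ m + y * (y^2) ^ m" for x y :: 'a
    by (simp add: n power_mult)
  also have "\<dots> x y = (x + y) * h x y" for x y :: 'a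
    unfolding h_def by (rule horadam_closed_form[symmetric])
      (simp_all add: power2_eq_square power_mult_distrib algebra_simps)
  finally show ?thesis
    using homogeneous_in_sym_form_horadam[of \<alpha> \<beta> a b m 1 1 "-1"] n
    by (auto simp: h_def delta_def intro!: exI[of _ "\<lambda>x y. (\<beta>*a - \<alpha>*b) ^ m * h x y"])
qed

lemma power_diff_expansion:
  assumes "n \<ge> 1"
  shows "\<exists>G. homogeneous_in (sym_form \<alpha> \<beta>) (sym_form a b) ((n - 1) div 2) G \<and>
     (\<forall>x y. (\<beta>*a - \<alpha>*b) ^ ((n - 1) div 2) * (x^n - y^n) =
        (x - y) * (x + y) ^ delta (n - 1) * G x y)"
proof (cases "even (n - 1)")
  case True
  then obtain m where "n - 1 = 2 * m" by blast
  with assms have n: "n = 2 * m + 1" by simp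
  define h where "h x y = horadam 1 (1 * (x^2 + y^2) + 1 * (x * y)) (x^2 + y^2) ((x * y)^2) m"
    for x y :: 'a
  have "x^n - y^n = x * (x^2) ^ m + (- y) * (y^2) ^ m" for x y :: 'a
    by (simp add: n power_mult)
  also have "\<dots> x y = (x - y) * h x y" for x y :: 'a
    unfolding h_def by (rule horadam_closed_form[symmetric])
      (simp_all add: power2_eq_square power_mult_distrib algebra_simps)
  finally show ?thesis
    using homogeneous_in_sym_form_horadam[of \<alpha> \<beta> a b m 1 1 1] n
    by (auto simp: h_def delta_def intro!: exI[of _ "\<lambda>x y. (\<beta>*a - \<alpha>*b) ^ m * h x y"])
next
  case False
  then obtain m where "n - 1 = 2 * m + 1" using oddE by blast
  with assms have n: "n = 2 * m + 2" by simp
  define h where "h x y = horadam 1 (1 * (x^2 + y^2) + 0 * (x * y)) (x^2 + y^2) ((x * y)^2) m"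
    for x y :: 'a
  have "x^n - y^n = x^2 * (x^2) ^ m + (- (y^2)) * (y^2) ^ m" for x y :: 'a
    by (simp add: n power_mult power_add power2_eq_square mult.assoc)
  also have "\<dots> x y = ((x - y) * (x + y)) * h x y" for x y :: 'a
    unfolding h_def by (rule horadam_closed_form[symmetric])
      (simp_all add: power2_eq_square power_mult_distrib algebra_simps)
  finally show ?thesis
    using homogeneous_in_sym_form_horadam[of \<alpha> \<beta> a b m 1 1 0] n
    by (auto simp: h_def delta_def intro!: exI[of _ "\<lambda>x y. (\<beta>*a - \<alpha>*b) ^ m * h x y"])
qed

lemma sum_product_roots:
  fixes p q :: complex
  shows "\<exists>x y. x + y = p \<and> x * y = q \<and> (x - y)^2 = p^2 - 4 * q"
proof -
  define r where "r = csqrt (p^2 - 4 * q)"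
  have "r^2 = p^2 - 4 * q"
    by (simp add: r_def)
  then show ?thesis
    by (intro exI[of _ "(p + r) / 2"] exI[of _ "(p - r) / 2"])
      (simp add: field_simps power2_eq_square)
qed

lemma sym_form_values:
  fixes a b \<alpha> \<beta> t :: complex
  assumes "\<beta>*a - \<alpha>*b \<noteq> 0"
  shows "\<exists>x y. sym_form \<alpha> \<beta> x y = 1 \<and> sym_form a b x y = t \<and>
    (\<beta>*a - \<alpha>*b) * (x + y)^2 = (\<beta> - 2*\<alpha>) * t + (2*a - b) \<and>
    (\<beta>*a - \<alpha>*b) * (x - y)^2 = (\<beta> + 2*\<alpha>) * t - (b + 2*a)"
proof -
  define D where "D = \<beta>*a - \<alpha>*b"
  have D: "D \<noteq> 0"
    using assms by (simp add: D_def)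
  \<comment> \<open>\<open>(v, u)\<close> solves \<open>\<alpha> v + \<beta> u = 1, a v + b u = t\<close>; then \<open>x\<^sup>2 + y\<^sup>2 = v\<close> and \<open>x y = u\<close>\<close>
  define u where "u = (a - \<alpha> * t) / D"
  define v where "v = (\<beta> * t - b) / D"
  obtain x y where xy: "x + y = csqrt (v + 2 * u)" "x * y = u"
    "(x - y)^2 = (csqrt (v + 2 * u))^2 - 4 * u"
    using sum_product_roots by blast
  have sum_sq: "(x + y)^2 = v + 2 * u" and diff_sq: "(x - y)^2 = v - 2 * u"
    using xy by simp_all
  have "x^2 + y^2 = v"
    using sum_sq xy(2) by (simp add: power2_eq_square algebra_simps)
  moreover have "\<alpha> * v + \<beta> * u = 1" "a * v + b * u = t"
    using D by (simp_all add: u_def v_def field_simps) (simp_all add: D_def algebra_simps)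
  ultimately have "sym_form \<alpha> \<beta> x y = 1" "sym_form a b x y = t"
    using xy(2) by (simp_all add: sym_form_eq)
  moreover have "D * (x + y)^2 = (\<beta> - 2*\<alpha>) * t + (2*a - b)"
    "D * (x - y)^2 = (\<beta> + 2*\<alpha>) * t - (b + 2*a)"
    unfolding sum_sq diff_sq using D by (simp_all add: u_def v_def field_simps)
  ultimately show ?thesis
    unfolding D_def[symmetric] by blast
qed

lemma finite_affine_roots:
  fixes k c :: "'a::field"
  assumes "c \<noteq> 0"
  shows "finite {t. k * t + c = 0}"
proof (rule finite_subset)
  show "{t. k * t + c = 0} \<subseteq> {- c / k}"
  proof
    fix t
    assume t: "t \<in> {t. k * t + c = 0}"
    then have "k \<noteq> 0"
      using assms by auto
    with t show "t \<in> {- c / k}"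
      by (simp add: field_simps eq_neg_iff_add_eq_0)
  qed
qed simp

lemma sym_form_values_generic:
  fixes a b \<alpha> \<beta> :: complex
  assumes D: "\<beta>*a - \<alpha>*b \<noteq> 0" and ab: "2*a - b \<noteq> 0"
  shows "\<exists>E. finite E \<and> (\<forall>t. t \<notin> E \<longrightarrow> (\<exists>x y. sym_form \<alpha> \<beta> x y = 1 \<and>
    sym_form a b x y = t \<and> x + y \<noteq> 0 \<and> (b + 2*a \<noteq> 0 \<longrightarrow> x - y \<noteq> 0)))"
proof -
  let ?E_sum = "{t. (\<beta> - 2*\<alpha>) * t + (2*a - b) = 0}"
  let ?E_diff = "{t. (\<beta> + 2*\<alpha>) * t - (b + 2*a) = 0 \<and> b + 2*a \<noteq> 0}"
  have "finite ?E_diff"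
  proof (cases "b + 2*a = 0")
    case False
    then have "finite {t. (\<beta> + 2*\<alpha>) * t + - (b + 2*a) = 0}"
      by (intro finite_affine_roots) (simp add: neg_eq_iff_add_eq_0)
    then show ?thesis
      by (rule finite_subset[rotated]) auto
  qed simp
  moreover have "\<exists>x y. sym_form \<alpha> \<beta> x y = 1 \<and> sym_form a b x y = t \<and>
      x + y \<noteq> 0 \<and> (b + 2*a \<noteq> 0 \<longrightarrow> x - y \<noteq> 0)" if "t \<notin> ?E_sum \<union> ?E_diff" for t
  proof -
    obtain x y where xy: "sym_form \<alpha> \<beta> x y = 1" "sym_form a b x y = t"
      and sum_sq: "(\<beta>*a - \<alpha>*b) * (x + y)^2 = (\<beta> - 2*\<alpha>) * t + (2*a - b)"
      and diff_sq: "(\<beta>*a - \<alpha>*b) * (x - y)^2 = (\<beta> + 2*\<alpha>) * t - (b + 2*a)"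
      using sym_form_values[OF D] by blast
    have "x + y \<noteq> 0"
    proof
      assume "x + y = 0"
      with sum_sq that show False by simp
    qed
    moreover have "x - y \<noteq> 0" if "b + 2*a \<noteq> 0"
    proof
      assume "x - y = 0"
      with diff_sq that \<open>t \<notin> ?E_sum \<union> ?E_diff\<close> show False by simp
    qed
    ultimately show ?thesis
      using xy by blast
  qed
  moreover have "finite ?E_sum"
    using finite_affine_roots[OF ab] .
  ultimately show ?thesis
    by (intro exI[of _ "?E_sum \<union> ?E_diff"]) blast
qed

lemma sym_form_at_roots:
  assumes "x + y = p" and "p^2 = 2*a - b" and "x * y = a"
  shows "sym_form c d x y = d * a - c * b"
proof -
  have "x^2 + y^2 = (x + y)^2 - 2 * (x * y)"
    by (simp add: power2_eq_square algebra_simps)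
  also have "\<dots> = - b"
    using assms by simp
  finally show ?thesis
    by (simp add: sym_form_eq assms(3))
qed

lemma sym_form_expansion_coeffs_0:
  fixes a b \<alpha> \<beta> p x0 y0 :: complex
  assumes "finite E"
    and "\<And>t. t \<notin> E \<Longrightarrow> \<exists>x y. sym_form \<alpha> \<beta> x y = 1 \<and> sym_form a b x y = t \<and> g x y \<noteq> 0"
    and "homogeneous_in (sym_form \<alpha> \<beta>) (sym_form a b) m G" and "\<And>x y. F x y = g x y * G x y"
    and "x0 + y0 = p" and "p^2 = 2*a - b" and "x0 * y0 = a"
  shows "F x0 y0 =
    g x0 y0 * expansion_coeffs (sym_form \<alpha> \<beta>) (sym_form a b) m g F 0 * (\<beta>*a - \<alpha>*b) ^ m"
proof -
  have "sym_form a b x0 y0 = 0" and "sym_form \<alpha> \<beta> x0 y0 = \<beta>*a - \<alpha>*b"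
    using sym_form_at_roots[OF assms(5-7)] by simp_all
  then show ?thesis
    using expansion_coeffs_0[OF assms(1-4), of x0 y0] by simp
qed

section \<open>The sequences \<open>Psi_seq\<close> and \<open>Phi_seq\<close>\<close>

lemma delta_Suc_Suc [simp]: "delta (Suc (Suc n)) = delta n"
  by (simp add: delta_def)

lemma power_delta_Suc:
  fixes p :: "'a::monoid_mult"
  shows "p ^ delta n * (p^2) ^ delta (Suc n) = p * p ^ delta (Suc n)"
  by (simp add: delta_def power2_eq_square)

lemma power_eq_delta_div_2: "(p::'a::monoid_mult) ^ n = p ^ delta n * (p^2) ^ (n div 2)"
proof -
  have "n = delta n + 2 * (n div 2)"
    by (simp add: delta_def)
  then show ?thesis
    by (metis power_add power_mult)
qed

lemma Psi_seq_power_sum: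
  assumes sum: "x + y = p" and p: "p^2 = 2*a - b" and prod: "x * y = a"
  shows "Psi_seq a b n * p ^ delta n = x^n + y^n"
proof (induction n rule: induct_nat_012)
  case (ge2 n)
  have "Psi_seq a b (Suc (Suc n)) * p ^ delta (Suc (Suc n)) =
      p ^ delta n * (2*a - b) ^ delta (Suc n) * Psi_seq a b (Suc n) - a * (Psi_seq a b n * p ^ delta n)"
    by (simp add: algebra_simps)
  also have "\<dots> = p * (Psi_seq a b (Suc n) * p ^ delta (Suc n)) - x * y * (Psi_seq a b n * p ^ delta n)"
    by (simp add: power_delta_Suc p[symmetric] prod)
  also have "\<dots> = x ^ Suc (Suc n) + y ^ Suc (Suc n)"
    unfolding ge2 by (simp add: sum[symmetric] algebra_simps)
  finally show ?case .
qed (simp_all add: delta_def sum)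

lemma Phi_seq_power_diff:
  assumes sum: "x + y = p" and p: "p^2 = 2*a - b" and prod: "x * y = a"
  shows "Phi_seq a b n * (x - y) * p ^ delta (Suc n) = x^n - y^n"
proof (induction n rule: induct_nat_012)
  case (ge2 n)
  have "Phi_seq a b (Suc (Suc n)) * (x - y) * p ^ delta (Suc (Suc (Suc n))) =
      p ^ delta (Suc n) * (2*a - b) ^ delta (Suc (Suc n)) * (Phi_seq a b (Suc n) * (x - y))
      - a * (Phi_seq a b n * (x - y) * p ^ delta (Suc n))"
    by (simp add: algebra_simps)
  also have "\<dots> = p * (Phi_seq a b (Suc n) * (x - y) * p ^ delta (Suc (Suc n)))
      - x * y * (Phi_seq a b n * (x - y) * p ^ delta (Suc n))"
    by (simp only: power_delta_Suc p[symmetric] prod) (simp add: algebra_simps)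
  also have "\<dots> = x ^ Suc (Suc n) - y ^ Suc (Suc n)"
    unfolding ge2 by (simp add: sum[symmetric] algebra_simps)
  finally show ?case .
qed (simp_all add: delta_def)

lemma product_of_s_roots:
  fixes a b p s :: complex
  assumes p: "p^2 = 2*a - b" and ab: "2*a - b \<noteq> 0" and s: "s^2 = (b + 2*a) / (b - 2*a)"
  shows "(p * (1 + s) / 2) * (p * (1 - s) / 2) = a"
proof -
  have "b - 2*a \<noteq> 0"
    using ab by simp
  then have s2: "s^2 * (b - 2*a) = b + 2*a"
    using s by (simp add: eq_divide_eq)
  have "(p * (1 + s) / 2) * (p * (1 - s) / 2) = (p^2 - p^2 * s^2) / 4"
    by (simp add: power2_eq_square algebra_simps)
  also have "p^2 * s^2 = - (s^2 * (b - 2*a))"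
    unfolding p by (simp add: algebra_simps)
  finally show ?thesis
    unfolding s2 p by simp
qed

lemma Psi_seq_closed_form:
  fixes a b s :: complex
  assumes ab: "2*a - b \<noteq> 0" and s: "s^2 = (b + 2*a) / (b - 2*a)"
  shows "Psi_seq a b n = (2*a - b) ^ (n div 2) / 2^n * ((1 + s)^n + (1 - s)^n)"
proof -
  define p where "p = csqrt (2*a - b)"
  have p: "p^2 = 2*a - b" and "p \<noteq> 0"
    using ab by (simp_all add: p_def)
  have pn: "p^n = p ^ delta n * (2*a - b) ^ (n div 2)"
    using power_eq_delta_div_2[of p n] by (simp add: p)
  have sum: "p * (1 + s) / 2 + p * (1 - s) / 2 = p"
    by (simp add: field_simps)
  have "p ^ delta n * Psi_seq a b n = (p * (1 + s) / 2)^n + (p * (1 - s) / 2)^n"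
    using Psi_seq_power_sum[OF sum p product_of_s_roots[OF p ab s], of n] by (simp only: mult.commute)
  also have "\<dots> = p ^ delta n * ((2*a - b) ^ (n div 2) / 2^n * ((1 + s)^n + (1 - s)^n))"
    by (simp only: power_divide power_mult_distrib pn) (simp add: field_simps)
  finally show ?thesis
    by (rule mult_left_cancel[THEN iffD1, rotated]) (simp add: \<open>p \<noteq> 0\<close>)
qed

lemma Phi_seq_closed_form:
  fixes a b s :: complex
  assumes ab: "2*a - b \<noteq> 0" and ab': "b + 2*a \<noteq> 0" and s: "s^2 = (b + 2*a) / (b - 2*a)"
    and n: "n \<ge> 1"
  shows "Phi_seq a b n = (2*a - b) ^ ((n - 1) div 2) / (2^n * s) * ((1 + s)^n - (1 - s)^n)"
proof -
  define p where "p = csqrt (2*a - b)"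
  have p: "p^2 = 2*a - b" and "p \<noteq> 0"
    using ab by (simp_all add: p_def)
  have "s \<noteq> 0"
  proof
    assume "s = 0"
    then have "(b + 2*a) / (b - 2*a) = 0"
      using s by simp
    then show False
      using ab ab' by simp
  qed
  obtain k where k: "n = Suc k"
    using n by (cases n) auto
  have pn: "p^n = p * p ^ delta k * (2*a - b) ^ (k div 2)"
    using power_eq_delta_div_2[of p k] by (simp add: p k)
  have sum: "p * (1 + s) / 2 + p * (1 - s) / 2 = p" and diff: "p * (1 + s) / 2 - p * (1 - s) / 2 = p * s"
    by (simp_all add: field_simps)
  have "(p * s * p ^ delta k) * Phi_seq a b n = (p * (1 + s) / 2)^n - (p * (1 - s) / 2)^n"
    using Phi_seq_power_diff[OF sum p product_of_s_roots[OF p ab s], of n]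
    unfolding diff k by (simp only: delta_Suc_Suc ac_simps)
  also have "\<dots> = (p * s * p ^ delta k) *
      ((2*a - b) ^ (k div 2) / (2^n * s) * ((1 + s)^n - (1 - s)^n))"
    using \<open>s \<noteq> 0\<close> by (simp only: power_divide power_mult_distrib pn) (simp add: field_simps)
  finally show ?thesis
    unfolding k diff_Suc_1
    by (rule mult_left_cancel[THEN iffD1, rotated]) (simp add: \<open>p \<noteq> 0\<close> \<open>s \<noteq> 0\<close>)
qed

section \<open>Coefficients of index 0\<close>

lemma Psi_coef_eq_expansion_coeffs:
  "Psi_coef a b \<alpha> \<beta> n = expansion_coeffs (sym_form \<alpha> \<beta>) (sym_form a b) (n div 2)
     (\<lambda>x y. (x + y) ^ delta n) (\<lambda>x y. (\<beta>*a - \<alpha>*b) ^ (n div 2) * (x^n + y^n))"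
  unfolding Psi_coef_def expansion_coeffs_def sym_form_def ..

lemma Phi_coef_eq_expansion_coeffs:
  "Phi_coef a b \<alpha> \<beta> n = expansion_coeffs (sym_form \<alpha> \<beta>) (sym_form a b) ((n - 1) div 2)
     (\<lambda>x y. (x - y) * (x + y) ^ delta (n - 1))
     (\<lambda>x y. (\<beta>*a - \<alpha>*b) ^ ((n - 1) div 2) * (x^n - y^n))"
  unfolding Phi_coef_def expansion_coeffs_def sym_form_def ..

lemma Psi_coef_0_eq_Psi_seq:
  fixes a b \<alpha> \<beta> :: complex
  assumes ab: "2*a - b \<noteq> 0" and nondeg: "\<beta>*a - \<alpha>*b \<noteq> 0"
  shows "Psi_coef a b \<alpha> \<beta> n 0 = Psi_seq a b n"
proof -
  obtain E where E: "finite E" and points: "\<And>t. t \<notin> E \<Longrightarrow> \<exists>x y. sym_form \<alpha> \<beta> x y = 1 \<and>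
      sym_form a b x y = t \<and> x + y \<noteq> 0 \<and> (b + 2*a \<noteq> 0 \<longrightarrow> x - y \<noteq> 0)"
    using sym_form_values_generic[OF nondeg ab] by blast
  have points': "\<exists>x y. sym_form \<alpha> \<beta> x y = 1 \<and> sym_form a b x y = t \<and> (x + y) ^ delta n \<noteq> 0"
    if "t \<notin> E" for t
    using points[OF that] by force
  obtain G where G: "homogeneous_in (sym_form \<alpha> \<beta>) (sym_form a b) (n div 2) G"
    and F: "\<And>x y. (\<beta>*a - \<alpha>*b) ^ (n div 2) * (x^n + y^n) = (x + y) ^ delta n * G x y"
    using power_sum_expansion by blast
  define p where "p = csqrt (2*a - b)"
  have p: "p^2 = 2*a - b" and "p \<noteq> 0"
    using ab by (simp_all add: p_def)
  obtain x0 y0 where x0y0: "x0 + y0 = p" "x0 * y0 = a"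
    using sum_product_roots by blast
  have "(\<beta>*a - \<alpha>*b) ^ (n div 2) * (x0^n + y0^n) =
      (x0 + y0) ^ delta n * Psi_coef a b \<alpha> \<beta> n 0 * (\<beta>*a - \<alpha>*b) ^ (n div 2)"
    unfolding Psi_coef_eq_expansion_coeffs
    by (rule sym_form_expansion_coeffs_0[where F = "\<lambda>x y. (\<beta>*a - \<alpha>*b) ^ (n div 2) * (x^n + y^n)"
          and g = "\<lambda>x y. (x + y) ^ delta n", OF E points' G F x0y0(1) p x0y0(2)])
  also have "x0^n + y0^n = Psi_seq a b n * p ^ delta n"
    by (rule Psi_seq_power_sum[OF x0y0(1) p x0y0(2), symmetric])
  finally have "(\<beta>*a - \<alpha>*b) ^ (n div 2) * p ^ delta n * Psi_seq a b n =
      (\<beta>*a - \<alpha>*b) ^ (n div 2) * p ^ delta n * Psi_coef a b \<alpha> \<beta> n 0"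
    unfolding x0y0(1) by (simp add: ac_simps)
  then have "Psi_seq a b n = Psi_coef a b \<alpha> \<beta> n 0"
    by (rule mult_left_cancel[THEN iffD1, rotated]) (use nondeg \<open>p \<noteq> 0\<close> in simp)
  then show ?thesis ..
qed

lemma Phi_coef_0_eq_Phi_seq:
  fixes a b \<alpha> \<beta> :: complex
  assumes ab: "2*a - b \<noteq> 0" and ab': "b + 2*a \<noteq> 0" and nondeg: "\<beta>*a - \<alpha>*b \<noteq> 0"
    and n: "n \<ge> 1"
  shows "Phi_coef a b \<alpha> \<beta> n 0 = Phi_seq a b n"
proof -
  obtain E where E: "finite E" and points: "\<And>t. t \<notin> E \<Longrightarrow> \<exists>x y. sym_form \<alpha> \<beta> x y = 1 \<and>
      sym_form a b x y = t \<and> x + y \<noteq> 0 \<and> (b + 2*a \<noteq> 0 \<longrightarrow> x - y \<noteq> 0)"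
    using sym_form_values_generic[OF nondeg ab] by blast
  have points': "\<exists>x y. sym_form \<alpha> \<beta> x y = 1 \<and> sym_form a b x y = t \<and>
      (x - y) * (x + y) ^ delta (n - 1) \<noteq> 0" if "t \<notin> E" for t
    using points[OF that] ab' by force
  obtain G where G: "homogeneous_in (sym_form \<alpha> \<beta>) (sym_form a b) ((n - 1) div 2) G"
    and F: "\<And>x y. (\<beta>*a - \<alpha>*b) ^ ((n - 1) div 2) * (x^n - y^n) =
      (x - y) * (x + y) ^ delta (n - 1) * G x y"
    using power_diff_expansion[OF n] by blast
  define p where "p = csqrt (2*a - b)"
  have p: "p^2 = 2*a - b" and "p \<noteq> 0"
    using ab by (simp_all add: p_def)
  obtain x0 y0 where x0y0: "x0 + y0 = p" "x0 * y0 = a" and "(x0 - y0)^2 = p^2 - 4 * a"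
    using sum_product_roots by blast
  then have "x0 - y0 \<noteq> 0"
    using ab' p by (auto simp: add_eq_0_iff)
  have "(\<beta>*a - \<alpha>*b) ^ ((n - 1) div 2) * (x0^n - y0^n) = (x0 - y0) * (x0 + y0) ^ delta (n - 1) *
      Phi_coef a b \<alpha> \<beta> n 0 * (\<beta>*a - \<alpha>*b) ^ ((n - 1) div 2)"
    unfolding Phi_coef_eq_expansion_coeffs
    by (rule sym_form_expansion_coeffs_0[
          where F = "\<lambda>x y. (\<beta>*a - \<alpha>*b) ^ ((n - 1) div 2) * (x^n - y^n)"
          and g = "\<lambda>x y. (x - y) * (x + y) ^ delta (n - 1)", OF E points' G F x0y0(1) p x0y0(2)])
  also have "x0^n - y0^n = Phi_seq a b n * (x0 - y0) * p ^ delta (n - 1)"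
    using Phi_seq_power_diff[OF x0y0(1) p x0y0(2), of n] n by (cases n) simp_all
  finally have "(\<beta>*a - \<alpha>*b) ^ ((n - 1) div 2) * (x0 - y0) * p ^ delta (n - 1) * Phi_seq a b n =
      (\<beta>*a - \<alpha>*b) ^ ((n - 1) div 2) * (x0 - y0) * p ^ delta (n - 1) * Phi_coef a b \<alpha> \<beta> n 0"
    unfolding x0y0(1) by (simp add: ac_simps)
  then have "Phi_seq a b n = Phi_coef a b \<alpha> \<beta> n 0"
    by (rule mult_left_cancel[THEN iffD1, rotated])
      (use nondeg \<open>p \<noteq> 0\<close> \<open>x0 - y0 \<noteq> 0\<close> in simp)
  then show ?thesis ..
qed

theorem theorem5p1:
  fixes a b \<alpha> \<beta> s :: complex and n :: nat
  assumes "2*a - b \<noteq> 0" and "\<beta>*a - \<alpha>*b \<noteq> 0" and "n \<ge> 1"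
    and "s^2 = (b + 2*a) / (b - 2*a)"
  shows "(Psi_coef a b \<alpha> \<beta> n 0 = Psi_seq a b n
       \<and> Psi_seq a b n = (2*a - b) ^ (n div 2) / 2^n * ((1 + s)^n + (1 - s)^n))
    \<and> (b + 2*a \<noteq> 0 \<longrightarrow>
         Phi_coef a b \<alpha> \<beta> n 0 = Phi_seq a b n
       \<and> Phi_seq a b n = (2*a - b) ^ ((n - 1) div 2) / (2^n * s) * ((1 + s)^n - (1 - s)^n))"
  using Psi_coef_0_eq_Psi_seq[OF assms(1,2)] Psi_seq_closed_form[OF assms(1,4)]
    Phi_coef_0_eq_Phi_seq[OF assms(1) _ assms(2,3)] Phi_seq_closed_form[OF assms(1) _ assms(4,3)]
  by blast

end
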